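(* Let $d\ge1$ and $K^\infty(t)=\frac{1}{2\pi}\,t\,(\pi-\arccos t)$ for $t\in[-1,1]$. For every spherical harmonic $Y$ on $\mathbb{S}^d$ of odd degree $k\ge3$, $$\int_{\mathbb{S}^d}K^\infty(\mathbf{u}^T\mathbf{v})\,Y(\mathbf{v})\,d\mathbf{v}=0\quad\text{for all }\mathbf{u}\in\mathbb{S}^d,$$ i.e. the eigenvalues of convolution with $K^\infty$ corresponding to odd harmonics of degree $k\ge3$ vanish.
   Context: $\mathbb{S}^d$ is the unit sphere in $\mathbb{R}^{d+1}$ with surface measure $d\mathbf{v}$. A spherical harmonic of degree $k$ is the restriction to $\mathbb{S}^d$ of a homogeneous harmonic polynomial of degree $k$ on $\mathbb{R}^{d+1}$. Note $K^\infty(\mathbf{x}^T\mathbf{y})$ is proportional to $\mathbb{E}_{\mathbf{w}}[\mathbb{1}\{\mathbf{w}^T\mathbf{x}>0\}\mathbb{1}\{\mathbf{w}^T\mathbf{y}>0\}]\,\mathbf{x}^T\mathbf{y}$ for $\mathbf{w}$ Gaussian (equivalently uniform on the sphere). *)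

theory Defs
  imports "HOL-Analysis.Analysis"
begin

text \<open>Ambient space R^(d+1) is real^'n with CARD('n) = d+1.\<close>

definition homogeneous_poly :: "nat \<Rightarrow> (real^'n::finite \<Rightarrow> real) \<Rightarrow> bool" where
  "homogeneous_poly k P \<longleftrightarrow>
     (\<exists>(A :: ('n \<Rightarrow> nat) set) (c :: ('n \<Rightarrow> nat) \<Rightarrow> real).
        finite A \<and> (\<forall>\<alpha>\<in>A. (\<Sum>i\<in>UNIV. \<alpha> i) = k) \<and>
        (\<forall>x. P x = (\<Sum>\<alpha>\<in>A. c \<alpha> * (\<Prod>i\<in>UNIV. (x $ i) ^ \<alpha> i))))"

definition second_partial :: "(real^'n::finite \<Rightarrow> real) \<Rightarrow> 'n \<Rightarrow> real^'n \<Rightarrow> real" where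
  "second_partial P i x = (deriv ^^ 2) (\<lambda>t. P (x + t *\<^sub>R axis i 1)) 0"

definition laplacian :: "(real^'n::finite \<Rightarrow> real) \<Rightarrow> real^'n \<Rightarrow> real" where
  "laplacian P x = (\<Sum>i\<in>UNIV. second_partial P i x)"

definition harmonic_homogeneous_poly :: "nat \<Rightarrow> (real^'n::finite \<Rightarrow> real) \<Rightarrow> bool" where
  "harmonic_homogeneous_poly k P \<longleftrightarrow> homogeneous_poly k P \<and> (\<forall>x. laplacian P x = 0)"

definition spherical_harmonic :: "nat \<Rightarrow> (real^'n::finite \<Rightarrow> real) \<Rightarrow> bool" where
  "spherical_harmonic k Y \<longleftrightarrow>
     (\<exists>P. harmonic_homogeneous_poly k P \<and> (\<forall>v\<in>sphere 0 1. Y v = P v))"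

text \<open>Surface measure on the unit sphere, via the cone construction:
  sigma(E) = n * Leb{ x in ball 0 1 - {0} : x/|x| in E }, n = dimension of ambient space.\<close>
definition sphere_surface :: "(real^'n::finite) measure" where
  "sphere_surface =
     distr (density (restrict_space lborel (ball 0 1 - {0})) (\<lambda>_. ennreal (real CARD('n))))
           (restrict_space borel (sphere 0 1)) (\<lambda>x. x /\<^sub>R norm x)"

definition Kinf :: "real \<Rightarrow> real" where
  "Kinf t = 1 / (2 * pi) * t * (pi - arccos t)"

end

theory Submission
  imports Defs "HOL-Library.Countable"
begin

(* On [-1, 1], Kinf t = t/4 + E(t), where E(t) = t arcsin t / (2 pi) is even.  For a
   spherical harmonic Y of odd degree the even part contributes nothing, since v \<mapsto> E(u.v) Y(v)
   is odd and the surface measure is invariant under v \<mapsto> -v.  The linear part contributes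
   nothing since the coordinate functions are orthogonal to harmonic homogeneous polynomials of
   degree k \<ge> 2.  That orthogonality follows from the integration by parts formula
   (n + d - 1) \<integral> v_i R = \<integral> \<partial>_i R for R homogeneous of degree d, which expresses that the angular
   derivatives v_i \<partial>_j f - v_j \<partial>_i f integrate to zero by rotation invariance. *)

section \<open>Orthogonal invariance of Lebesgue measure\<close>

(* The change of variables theorems of HOL-Analysis need an index type of class wellorder.  A copy
   of an arbitrary finite index type is well-ordered through its injection into nat. *)
typedef 'a ord_index = "UNIV :: 'a set" by auto

instantiation ord_index :: (finite) linorder
begin

definition less_eq_ord_index :: "'a ord_index \<Rightarrow> 'a ord_index \<Rightarrow> bool" where
  "less_eq_ord_index x y \<longleftrightarrow> to_nat (Rep_ord_index x) \<le> to_nat (Rep_ord_index y)"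

definition less_ord_index :: "'a ord_index \<Rightarrow> 'a ord_index \<Rightarrow> bool" where
  "less_ord_index x y \<longleftrightarrow> to_nat (Rep_ord_index x) < to_nat (Rep_ord_index y)"

instance
  by standard (auto simp: less_eq_ord_index_def less_ord_index_def Rep_ord_index_inject)

end

instance ord_index :: (finite) finite
proof
  have "(UNIV :: 'a ord_index set) = Abs_ord_index ` UNIV"
    by (metis Rep_ord_index_inverse UNIV_I image_eqI subsetI subset_antisym)
  then show "finite (UNIV :: 'a ord_index set)"
    by (metis finite finite_imageI)
qed

instance ord_index :: (finite) wellorder
proof
  fix P :: "'a ord_index \<Rightarrow> bool" and a :: "'a ord_index"
  assume step: "\<And>x. (\<And>y. y < x \<Longrightarrow> P y) \<Longrightarrow> P x"
  have "\<forall>x::'a ord_index. to_nat (Rep_ord_index x) = n \<longrightarrow> P x" for n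
    by (induction n rule: less_induct) (use step in \<open>auto simp: less_ord_index_def\<close>)
  then show "P a" by blast
qed

definition to_ord_index :: "real^'n \<Rightarrow> real^'n ord_index" where
  "to_ord_index x = (\<chi> j. x $ Rep_ord_index j)"

definition of_ord_index :: "real^'n ord_index \<Rightarrow> real^'n" where
  "of_ord_index y = (\<chi> i. y $ Abs_ord_index i)"

lemma of_to_ord_index [simp]: "of_ord_index (to_ord_index x) = x"
  by (simp add: to_ord_index_def of_ord_index_def vec_eq_iff Abs_ord_index_inverse)

lemma linear_to_ord_index: "linear to_ord_index"
  by (auto simp: linear_iff to_ord_index_def vec_eq_iff)

lemma linear_of_ord_index: "linear of_ord_index"
  by (auto simp: linear_iff of_ord_index_def vec_eq_iff)

lemma sum_ord_index: "(\<Sum>j\<in>UNIV. f (Rep_ord_index j)) = (\<Sum>i\<in>(UNIV::'n::finite set). f i)"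
  by (metis (no_types) sum.reindex_bij_betw bij_betw_def inj_on_def Rep_ord_index_inject
      type_definition.Rep_range type_definition_ord_index)

lemma prod_ord_index: "(\<Prod>j\<in>UNIV. f (Rep_ord_index j)) = (\<Prod>i\<in>(UNIV::'n::finite set). f i)"
  by (metis (no_types) prod.reindex_bij_betw bij_betw_def inj_on_def Rep_ord_index_inject
      type_definition.Rep_range type_definition_ord_index)

lemma inner_of_ord_index: "of_ord_index x \<bullet> of_ord_index y = x \<bullet> (y :: real^'n::finite ord_index)"
  using sum_ord_index[of "\<lambda>i. x $ Abs_ord_index i * y $ Abs_ord_index i"]
  by (simp add: inner_vec_def of_ord_index_def Rep_ord_index_inverse)

lemma linear_borel_measurable:
  fixes f :: "'a::euclidean_space \<Rightarrow> 'b::euclidean_space"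
  shows "linear f \<Longrightarrow> f \<in> borel_measurable borel"
  by (intro borel_measurable_continuous_onI linear_continuous_on)
     (simp add: linear_conv_bounded_linear[symmetric])

lemma prod_Basis_vec: "(\<Prod>b\<in>(Basis::(real^'n) set). f b) = (\<Prod>i\<in>UNIV. f (axis i (1::real)))"
proof -
  have "inj (\<lambda>i::'n. axis i (1::real))"
    by (auto simp: inj_def axis_eq_axis)
  then have "prod f ((\<lambda>i. axis i 1) ` UNIV) = (\<Prod>i\<in>UNIV. f (axis i (1::real)))"
    by (simp add: prod.reindex)
  moreover have "(Basis::(real^'n) set) = (\<lambda>i. axis i 1) ` UNIV"
    by (auto simp: Basis_vec_def)
  ultimately show ?thesis by simp
qed

lemma borel_measurable_of_ord_index [measurable]: "of_ord_index \<in> borel_measurable borel"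
  by (rule linear_borel_measurable[OF linear_of_ord_index])

lemma lborel_distr_of_ord_index:
  "distr (lborel :: (real^'n::finite ord_index) measure) borel of_ord_index = lborel"
proof (rule lborel_eqI[symmetric])
  fix l u :: "real^'n"
  assume le: "\<And>b. b \<in> Basis \<Longrightarrow> l \<bullet> b \<le> u \<bullet> b"
  have preimage: "of_ord_index -` box l u = box (to_ord_index l) (to_ord_index u)"
    by (auto simp: mem_box_cart of_ord_index_def to_ord_index_def)
       (metis Rep_ord_index_inverse Abs_ord_index_inverse UNIV_I)+
  have "l $ i \<le> u $ i" for i
    using le[of "axis i 1"] by (simp add: inner_axis)
  then have "\<forall>b\<in>Basis. to_ord_index l \<bullet> b \<le> to_ord_index u \<bullet> b"
    by (auto simp: Basis_vec_def inner_axis to_ord_index_def)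
  then have "emeasure lborel (box (to_ord_index l) (to_ord_index u))
      = (\<Prod>j\<in>UNIV. u $ Rep_ord_index j - l $ Rep_ord_index j)"
    by (simp add: emeasure_lborel_box_eq prod_Basis_vec inner_axis to_ord_index_def)
  also have "\<dots> = (\<Prod>b\<in>Basis. (u - l) \<bullet> b)"
    using prod_ord_index[of "\<lambda>i. u $ i - l $ i"] by (simp add: prod_Basis_vec inner_axis)
  finally show "emeasure (distr lborel borel of_ord_index) (box l u) = (\<Prod>b\<in>Basis. (u - l) \<bullet> b)"
    by (simp add: emeasure_distr preimage)
qed simp

lemma lborel_distr_orthogonal_transformation_wellorder:
  fixes T :: "real^'n::{finite,wellorder} \<Rightarrow> real^'n::_"
  assumes T: "orthogonal_transformation T"
  shows "distr lborel borel T = lborel"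
proof (rule lborel_eqI[symmetric])
  fix l u :: "real^'n::{finite,wellorder}"
  assume le: "\<And>b. b \<in> Basis \<Longrightarrow> l \<bullet> b \<le> u \<bullet> b"
  have Tm: "T \<in> borel_measurable borel"
    using T by (simp add: linear_borel_measurable orthogonal_transformation_linear)
  have preimage: "T -` box l u = inv T ` box l u"
    using orthogonal_transformation_bij[OF T] by (simp add: bij_vimage_eq_inv_image)
  have "measure lborel (T -` box l u) = measure lborel (box l u)"
    using measure_orthogonal_image[OF orthogonal_transformation_inv[OF T], of "box l u"]
      measurable_sets_borel[OF Tm, of "box l u"]
    by (simp add: preimage[symmetric])
  moreover have "bounded (T -` box l u)"
    unfolding preimage using orthogonal_transformation_inv[OF T]
    by (intro bounded_linear_image)
       (simp_all add: orthogonal_transformation_linear linear_conv_bounded_linear[symmetric])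
  ultimately have "emeasure lborel (T -` box l u) = emeasure lborel (box l u)"
    using emeasure_bounded_finite[of "box l u"] emeasure_bounded_finite[of "T -` box l u"]
    by (simp add: emeasure_eq_ennreal_measure)
  then show "emeasure (distr lborel borel T) (box l u) = (\<Prod>b\<in>Basis. (u - l) \<bullet> b)"
    using le Tm by (simp add: emeasure_distr emeasure_lborel_box_eq)
qed simp

lemma lborel_distr_orthogonal_transformation:
  fixes R :: "real^'n::finite \<Rightarrow> real^'n"
  assumes R: "orthogonal_transformation R"
  shows "distr lborel borel R = lborel"
proof -
  define T where "T = to_ord_index \<circ> R \<circ> of_ord_index"
  have T: "orthogonal_transformation T"
    using R unfolding orthogonal_transformation_def T_def
    by (auto intro!: linear_compose linear_to_ord_index linear_of_ord_index)
       (metis inner_of_ord_index of_to_ord_index)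
  have [measurable]: "R \<in> borel_measurable borel" "T \<in> borel_measurable borel"
    using R T by (simp_all add: linear_borel_measurable orthogonal_transformation_linear)
  have "distr lborel borel R = distr (distr lborel borel of_ord_index) borel R"
    by (simp add: lborel_distr_of_ord_index)
  also have "\<dots> = distr lborel borel (R \<circ> of_ord_index)"
    by (simp add: distr_distr)
  also have "R \<circ> of_ord_index = of_ord_index \<circ> T"
    by (simp add: T_def fun_eq_iff)
  also have "distr lborel borel (of_ord_index \<circ> T) = distr (distr lborel borel T) borel of_ord_index"
    by (simp add: distr_distr)
  finally show ?thesis
    by (simp add: lborel_distr_of_ord_index lborel_distr_orthogonal_transformation_wellorder[OF T])
qed

section \<open>The surface measure\<close>

lemma space_sphere_surface: "space (sphere_surface :: (real^'n::finite) measure) = sphere 0 1"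
  by (simp add: sphere_surface_def space_restrict_space)

lemma normalize_measurable_punctured_ball:
  "(\<lambda>x. x /\<^sub>R norm x) \<in> restrict_space lborel (ball (0::real^'n::finite) 1 - {0})
     \<rightarrow>\<^sub>M restrict_space borel (sphere 0 1)"
  by (rule measurable_restrict_space2)
     (auto simp: space_restrict_space intro: measurable_restrict_space1)

lemma integral_sphere_surface:
  fixes g :: "real^'n::finite \<Rightarrow> real"
  assumes [measurable]: "g \<in> borel_measurable borel"
  shows "integral\<^sup>L sphere_surface g = (\<integral>x. indicator (ball 0 1 - {0}) x *
           (real CARD('n) * g (x /\<^sub>R norm x)) \<partial>lborel)"
proof -
  have "integral\<^sup>L sphere_surface g = (\<integral>x. g (x /\<^sub>R norm x) \<partial>density
      (restrict_space lborel (ball 0 1 - {0})) (\<lambda>_. ennreal (real CARD('n))))"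
    unfolding sphere_surface_def
    by (rule integral_distr)
       (simp_all add: normalize_measurable_punctured_ball measurable_restrict_space1)
  also have "\<dots> = (\<integral>x. real CARD('n) *\<^sub>R g (x /\<^sub>R norm x)
      \<partial>restrict_space lborel (ball 0 1 - {0}))"
    by (rule integral_density) (auto intro: measurable_restrict_space1)
  also have "\<dots> = (\<integral>x. indicator (ball 0 1 - {0}) x *\<^sub>R (real CARD('n) *\<^sub>R g (x /\<^sub>R norm x))
      \<partial>lborel)"
    by (rule integral_restrict_space) simp
  finally show ?thesis by simp
qed

lemma finite_measure_sphere_surface: "finite_measure (sphere_surface :: (real^'n::finite) measure)"
proof -
  let ?D = "density (restrict_space lborel (ball (0::real^'n) 1 - {0}))
              (\<lambda>_. ennreal (real CARD('n)))"
  have "space ?D \<in> sets (restrict_space lborel (ball (0::real^'n) 1 - {0}))"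
    by (metis sets.top sets_density space_density)
  then have "emeasure ?D (space ?D) = ennreal (real CARD('n)) *
      emeasure (restrict_space lborel (ball (0::real^'n) 1 - {0})) (space ?D)"
    by (simp add: emeasure_density nn_integral_cmult_indicator)
  also have "\<dots> = ennreal (real CARD('n)) * emeasure lborel (ball (0::real^'n) 1 - {0})"
    by (simp add: emeasure_restrict_space space_restrict_space)
  also have "\<dots> < \<infinity>"
    using emeasure_bounded_finite[OF bounded_subset[OF bounded_ball Diff_subset, of 0 1 "{0::real^'n}"]]
    by (simp add: ennreal_mult_less_top)
  finally have "finite_measure ?D"
    by (intro finite_measureI) simp
  then show ?thesis
    unfolding sphere_surface_def
    by (rule finite_measure.finite_measure_distr) (simp add: normalize_measurable_punctured_ball)
qed

lemma integral_sphere_surface_orthogonal_transformation: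
  fixes g :: "real^'n::finite \<Rightarrow> real" and R :: "real^'n \<Rightarrow> real^'n"
  assumes [measurable]: "g \<in> borel_measurable borel" and R: "orthogonal_transformation R"
  shows "(\<integral>v. g (R v) \<partial>sphere_surface) = integral\<^sup>L sphere_surface g"
proof -
  have [measurable]: "R \<in> borel_measurable borel"
    using R by (simp add: linear_borel_measurable orthogonal_transformation_linear)
  define F where "F = (\<lambda>x. indicator (ball 0 1 - {0}) x * (real CARD('n) * g (x /\<^sub>R norm x)))"
  have [measurable]: "ball (0::real^'n) 1 - {0} \<in> sets borel"
    by simp
  have [measurable]: "F \<in> borel_measurable borel"
    unfolding F_def by measurable
  have "R x \<in> ball 0 1 - {0} \<longleftrightarrow> x \<in> ball 0 1 - {0}" for x
  proof -
    have "norm (R x) = norm x"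
      using R by (rule orthogonal_transformation_norm)
    then show ?thesis
      by auto
  qed
  then have "(\<integral>v. g (R v) \<partial>sphere_surface) = (\<integral>x. F (R x) \<partial>lborel)"
    using R by (simp add: integral_sphere_surface F_def indicator_def orthogonal_transformation_norm
        orthogonal_transformation_scaleR)
  also have "\<dots> = integral\<^sup>L (distr lborel borel R) F"
    by (rule integral_distr[symmetric]) simp_all
  finally show ?thesis
    by (simp add: lborel_distr_orthogonal_transformation[OF R] F_def integral_sphere_surface)
qed

lemma continuous_borel_measurable_sphere_surface:
  fixes f :: "real^'n::finite \<Rightarrow> real"
  shows "continuous_on UNIV f \<Longrightarrow> f \<in> borel_measurable sphere_surface"
  unfolding sphere_surface_def
  by (simp add: borel_measurable_continuous_onI measurable_restrict_space1)

lemma continuous_integrable_sphere_surface: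
  fixes f :: "real^'n::finite \<Rightarrow> real"
  assumes f: "continuous_on UNIV f"
  shows "integrable sphere_surface f"
proof -
  obtain B where "\<And>x. x \<in> sphere (0::real^'n) 1 \<Longrightarrow> norm (f x) \<le> B"
    using continuous_on_compact_bound[OF compact_sphere continuous_on_subset[OF f]] by blast
  then show ?thesis
    by (intro finite_measure.integrable_const_bound[OF finite_measure_sphere_surface, of _ B]
        AE_I2 continuous_borel_measurable_sphere_surface f) (simp add: space_sphere_surface)
qed

lemma integral_sphere_surface_odd_eq_0:
  fixes g :: "real^'n::finite \<Rightarrow> real"
  assumes "continuous_on UNIV g" and "\<And>v. g (- v) = - g v"
  shows "integral\<^sup>L sphere_surface g = 0"
proof -
  have "(\<integral>v. g (- v) \<partial>sphere_surface) = integral\<^sup>L sphere_surface g"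
    using assms(1) orthogonal_transformation_neg[of "\<lambda>x. x"]
    by (intro integral_sphere_surface_orthogonal_transformation borel_measurable_continuous_onI) auto
  then show ?thesis
    by (simp add: assms(2))
qed

section \<open>Angular derivatives integrate to zero\<close>

lemma integral_sphere_surface_derivative_eq_0:
  fixes F G :: "real \<Rightarrow> real^'n::finite \<Rightarrow> real"
  assumes invariant: "\<And>t. integral\<^sup>L sphere_surface (F t) = integral\<^sup>L sphere_surface (F 0)"
    and deriv: "\<And>t v. ((\<lambda>t. F t v) has_real_derivative G t v) (at t)"
    and bound: "\<And>t v. v \<in> sphere 0 1 \<Longrightarrow> \<bar>G t v\<bar> \<le> C"
    and cont_F: "\<And>t. continuous_on UNIV (F t)" and cont_G: "continuous_on UNIV (G 0)"
  shows "integral\<^sup>L sphere_surface (G 0) = 0"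
proof -
  let ?S = "sphere_surface :: (real^'n) measure"
  define h where "h m = 1 / real (Suc m)" for m
  have h_pos: "h m > 0" for m
    by (simp add: h_def)
  define q where "q m v = (F (h m) v - F 0 v) / h m" for m v
  have "(\<lambda>m. integral\<^sup>L ?S (q m)) \<longlonglongrightarrow> integral\<^sup>L ?S (G 0)"
  proof (rule integral_dominated_convergence[where w="\<lambda>_. C"])
    have "continuous_on UNIV (q m)" for m
      unfolding q_def using h_pos[of m]
      by (intro continuous_on_divide continuous_on_diff cont_F continuous_on_const) simp
    then show "G 0 \<in> borel_measurable ?S" "q m \<in> borel_measurable ?S" for m
      using cont_G by (simp_all add: continuous_borel_measurable_sphere_surface)
    show "integrable ?S (\<lambda>_. C)"
      by (simp add: continuous_integrable_sphere_surface)
    have h_lim: "filterlim h (at 0) sequentially"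
      unfolding filterlim_at h_def
      using LIMSEQ_inverse_real_of_nat by (simp add: inverse_eq_divide)
    have "(\<lambda>m. q m v) \<longlonglongrightarrow> G 0 v" for v
      using filterlim_compose[OF deriv[of v 0, unfolded DERIV_def] h_lim] by (simp add: q_def)
    then show "AE v in ?S. (\<lambda>m. q m v) \<longlonglongrightarrow> G 0 v"
      by simp
    show "AE v in ?S. norm (q m v) \<le> C" for m
    proof (rule AE_I2)
      fix v assume "v \<in> space ?S"
      moreover obtain z where "F (h m) v - F 0 v = (h m - 0) * G z v"
        using MVT2[OF h_pos[of m], of "\<lambda>t. F t v" "\<lambda>t. G t v", OF deriv] by blast
      ultimately show "norm (q m v) \<le> C"
        using h_pos[of m] bound[of v z] by (simp add: q_def space_sphere_surface)
    qed
  qed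
  moreover have "integral\<^sup>L ?S (q m) = 0" for m
  proof -
    have "integral\<^sup>L ?S (q m) = (integral\<^sup>L ?S (F (h m)) - integral\<^sup>L ?S (F 0)) / h m"
      unfolding q_def using cont_F by (simp add: integral_diff continuous_integrable_sphere_surface)
    then show ?thesis
      using invariant[of "h m"] by simp
  qed
  ultimately show ?thesis
    by (simp add: LIMSEQ_const_iff)
qed

definition plane_generator :: "'n \<Rightarrow> 'n \<Rightarrow> real^'n::finite \<Rightarrow> real^'n" where
  "plane_generator i j v = (\<chi> k. if k = i then - v$j else if k = j then v$i else 0)"

(* exp (t J) = I + sin t J + (1 - cos t) J^2 for the generator J, as J^3 = -J when i \<noteq> j. *)
definition plane_rotation :: "'n \<Rightarrow> 'n \<Rightarrow> real \<Rightarrow> real^'n::finite \<Rightarrow> real^'n" where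
  "plane_rotation i j t v = v + sin t *\<^sub>R plane_generator i j v
     + (1 - cos t) *\<^sub>R plane_generator i j (plane_generator i j v)"

lemma plane_rotation_nth:
  assumes "i \<noteq> j"
  shows "plane_rotation i j t v $ k = (if k = i then cos t * v$i - sin t * v$j
           else if k = j then sin t * v$i + cos t * v$j else v$k)"
  using assms by (auto simp: plane_rotation_def plane_generator_def algebra_simps)

lemma sum_remove_two:
  fixes F :: "'n::finite \<Rightarrow> 'a::comm_monoid_add"
  assumes "i \<noteq> j"
  shows "(\<Sum>k\<in>UNIV. F k) = F i + F j + (\<Sum>k\<in>UNIV - {i, j}. F k)"
proof -
  have "UNIV - {i} - {j} = UNIV - {i, j}"
    by auto
  with assms show ?thesis
    by (simp add: sum.remove[of UNIV i] sum.remove[of "UNIV - {i}" j] add.assoc)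
qed

lemma plane_rotation_0 [simp]: "plane_rotation i j 0 v = v"
  by (simp add: plane_rotation_def)

lemma orthogonal_transformation_plane_rotation:
  assumes ij: "i \<noteq> j"
  shows "orthogonal_transformation (plane_rotation i j t :: real^'n::finite \<Rightarrow> real^'n)"
  unfolding orthogonal_transformation_def
proof (intro conjI allI)
  show "linear (plane_rotation i j t :: real^'n \<Rightarrow> real^'n)"
    by (auto simp: linear_iff plane_rotation_def plane_generator_def vec_eq_iff algebra_simps)
  fix v w :: "real^'n"
  have rest: "(\<Sum>k\<in>UNIV - {i, j}. plane_rotation i j t v $ k * plane_rotation i j t w $ k)
      = (\<Sum>k\<in>UNIV - {i, j}. v $ k * w $ k)"
    by (rule sum.cong) (auto simp: plane_rotation_nth[OF ij])
  have "(cos t * v$i - sin t * v$j) * (cos t * w$i - sin t * w$j)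
      + (sin t * v$i + cos t * v$j) * (sin t * w$i + cos t * w$j) = v$i * w$i + v$j * w$j"
    using sin_cos_squared_add3[of t] by algebra
  with ij rest show "plane_rotation i j t v \<bullet> plane_rotation i j t w = v \<bullet> w"
    unfolding inner_vec_def
    by (simp add: sum_remove_two[OF ij, of "\<lambda>k. v $ k * w $ k"]
        sum_remove_two[OF ij, of "\<lambda>k. plane_rotation i j t v $ k * plane_rotation i j t w $ k"])
       (simp add: plane_rotation_nth[OF ij])
qed

lemma has_derivative_plane_rotation:
  "((\<lambda>t. plane_rotation i j t v) has_derivative (\<lambda>h. h *\<^sub>R
     (cos t *\<^sub>R plane_generator i j v + sin t *\<^sub>R plane_generator i j (plane_generator i j v))))
     (at t)"
  unfolding plane_rotation_def by (auto intro!: derivative_eq_intros simp: algebra_simps)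

lemma abs_plane_rotation_derivative_nth_le:
  fixes v :: "real^'n::finite"
  assumes "norm v \<le> 1"
  shows "\<bar>cos t * plane_generator i j v $ k + sin t * plane_generator i j (plane_generator i j v) $ k\<bar> \<le> 2"
proof -
  have generator_le: "\<bar>plane_generator i j w $ m\<bar> \<le> 1" if "\<And>l. \<bar>w $ l\<bar> \<le> 1" for w :: "real^'n" and m
    using that by (simp add: plane_generator_def)
  have "\<bar>v $ l\<bar> \<le> 1" for l
    using component_le_norm_cart[of v l] assms by simp
  then have "\<bar>cos t * plane_generator i j v $ k\<bar> \<le> 1"
      "\<bar>sin t * plane_generator i j (plane_generator i j v) $ k\<bar> \<le> 1"
    using generator_le abs_sin_le_one[of t] abs_cos_le_one[of t] by (simp_all add: abs_mult mult_le_one)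
  then show ?thesis
    using abs_triangle_ineq[of "cos t * plane_generator i j v $ k"
        "sin t * plane_generator i j (plane_generator i j v) $ k"]
    by simp
qed

lemma integral_sphere_surface_angular_derivative:
  fixes f :: "real^'n::finite \<Rightarrow> real" and p :: "'n \<Rightarrow> real^'n \<Rightarrow> real"
  assumes ij: "i \<noteq> j"
    and grad: "\<And>x. (f has_derivative (\<lambda>h. \<Sum>k\<in>UNIV. p k x * h$k)) (at x)"
    and cont_p: "\<And>k. continuous_on UNIV (p k)"
  shows "(\<integral>v. v$i * p j v - v$j * p i v \<partial>sphere_surface) = 0"
proof -
  let ?J = "plane_generator i j" and ?R = "plane_rotation i j"
  define D where "D t v = cos t *\<^sub>R ?J v + sin t *\<^sub>R ?J (?J v)" for t and v :: "real^'n"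
  define G where "G t v = (\<Sum>k\<in>UNIV. p k (?R t v) * D t v $ k)" for t v
  have deriv: "((\<lambda>t. f (?R t v)) has_real_derivative G t v) (at t)" for t v
  proof -
    have "(\<lambda>h. \<Sum>k\<in>UNIV. p k (?R t v) * (h *\<^sub>R D t v) $ k) = (*) (G t v)"
      by (auto simp: G_def sum_distrib_left algebra_simps)
    then show ?thesis
      using has_derivative_compose[OF has_derivative_plane_rotation[of i j v t] grad[of "?R t v"]]
      by (simp add: has_field_derivative_def D_def)
  qed
  have "continuous_on (sphere 0 1) (\<lambda>y. \<Sum>k\<in>UNIV. \<bar>p k y\<bar>)"
    by (intro continuous_intros continuous_on_subset[OF cont_p]) simp
  then obtain B where B: "\<And>y. y \<in> sphere 0 1 \<Longrightarrow> norm (\<Sum>k\<in>UNIV. \<bar>p k y\<bar>) \<le> B"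
    using continuous_on_compact_bound[OF compact_sphere] by blast
  have bound: "\<bar>G t v\<bar> \<le> 2 * B" if v: "v \<in> sphere 0 1" for t v
  proof -
    have "\<bar>G t v\<bar> \<le> (\<Sum>k\<in>UNIV. \<bar>p k (?R t v)\<bar> * 2)"
      unfolding G_def using v
      by (intro sum_abs[THEN order_trans] sum_mono)
         (simp add: abs_mult mult_left_mono D_def abs_plane_rotation_derivative_nth_le)
    also have "\<dots> \<le> 2 * B"
      using v B[of "?R t v"] orthogonal_transformation_norm[OF orthogonal_transformation_plane_rotation[OF ij]]
      by (simp add: sum_distrib_right[symmetric])
    finally show ?thesis .
  qed
  have cont_f: "continuous_on UNIV f"
    by (intro continuous_at_imp_continuous_on ballI has_derivative_continuous[OF grad])
  have "integral\<^sup>L sphere_surface (\<lambda>v. f (?R t v)) = integral\<^sup>L sphere_surface (\<lambda>v. f (?R 0 v))" for t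
    using integral_sphere_surface_orthogonal_transformation[OF
          borel_measurable_continuous_onI[OF cont_f] orthogonal_transformation_plane_rotation[OF ij]]
    by simp
  moreover have "continuous_on UNIV (\<lambda>v. f (?R t v))" for t
    using orthogonal_transformation_linear[OF orthogonal_transformation_plane_rotation[OF ij]]
    by (intro continuous_on_compose2[OF cont_f] linear_continuous_on)
       (auto simp: linear_conv_bounded_linear[symmetric])
  moreover have G_0: "G 0 = (\<lambda>v. v$i * p j v - v$j * p i v)"
    using ij by (simp add: fun_eq_iff G_def D_def sum_remove_two[OF ij] plane_generator_def)
  moreover have "continuous_on UNIV (G 0)"
    unfolding G_0 by (intro continuous_intros cont_p)
  ultimately show ?thesis
    using integral_sphere_surface_derivative_eq_0[of "\<lambda>t v. f (?R t v)", OF _ deriv bound] by simp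
qed

section \<open>Polynomial functions and partial derivatives\<close>

definition monomial :: "('n \<Rightarrow> nat) \<Rightarrow> real^'n::finite \<Rightarrow> real" where
  "monomial a x = (\<Prod>i\<in>UNIV. (x$i) ^ a i)"

definition total_degree :: "('n::finite \<Rightarrow> nat) \<Rightarrow> nat" where
  "total_degree a = (\<Sum>i\<in>UNIV. a i)"

definition partial_deriv :: "'n \<Rightarrow> (real^'n::finite \<Rightarrow> real) \<Rightarrow> real^'n \<Rightarrow> real" where
  "partial_deriv k f x = deriv (\<lambda>t. f (x + t *\<^sub>R axis k 1)) 0"

(* Monomials are indexed through a map g on an index set A rather than by their exponents, so
   that differentiating a representation keeps its index set; terms with zero coefficient may
   have any degree. *)
definition poly_repr :: "('n \<Rightarrow> nat) set \<Rightarrow> (('n \<Rightarrow> nat) \<Rightarrow> real) \<Rightarrow>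
    (('n \<Rightarrow> nat) \<Rightarrow> ('n \<Rightarrow> nat)) \<Rightarrow> (real^'n::finite \<Rightarrow> real) \<Rightarrow> bool" where
  "poly_repr A c g f \<longleftrightarrow> finite A \<and> (\<forall>x. f x = (\<Sum>a\<in>A. c a * monomial (g a) x))"

definition polyfun :: "(real^'n::finite \<Rightarrow> real) \<Rightarrow> bool" where
  "polyfun f \<longleftrightarrow> (\<exists>A c g. poly_repr A c g f)"

definition homogeneous_polyfun :: "nat \<Rightarrow> (real^'n::finite \<Rightarrow> real) \<Rightarrow> bool" where
  "homogeneous_polyfun d f \<longleftrightarrow>
     (\<exists>A c g. poly_repr A c g f \<and> (\<forall>a\<in>A. c a \<noteq> 0 \<longrightarrow> total_degree (g a) = d))"

lemma homogeneous_polyfun_imp_polyfun: "homogeneous_polyfun d f \<Longrightarrow> polyfun f"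
  unfolding homogeneous_polyfun_def polyfun_def by blast

lemma homogeneous_poly_imp_homogeneous_polyfun:
  "homogeneous_poly d f \<Longrightarrow> homogeneous_polyfun d f"
  unfolding homogeneous_poly_def homogeneous_polyfun_def poly_repr_def
  by (auto simp: total_degree_def monomial_def intro!: exI[of _ "\<lambda>a. a"])

lemma monomial_fun_upd: "monomial (a(k := m)) x = (x$k)^m * (\<Prod>i\<in>UNIV - {k}. (x$i) ^ a i)"
  unfolding monomial_def by (simp add: prod.remove[of UNIV k])

lemma total_degree_fun_upd: "total_degree (a(k := m)) + a k = total_degree a + m"
  unfolding total_degree_def by (simp add: sum.remove[of UNIV k])

lemma coord_mult_monomial: "x$j * monomial a x = monomial (a(j := a j + 1)) x"
  using monomial_fun_upd[of a j "a j" x] by (simp add: monomial_fun_upd)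

definition monomial_deriv :: "'n \<Rightarrow> ('n \<Rightarrow> nat) \<Rightarrow> real^'n::finite \<Rightarrow> real" where
  "monomial_deriv k a x = real (a k) * monomial (a(k := a k - 1)) x"

lemma monomial_has_derivative:
  "(monomial a has_derivative (\<lambda>h. \<Sum>k\<in>UNIV. monomial_deriv k a x * h$k)) (at x)"
proof -
  have "((\<lambda>x. \<Prod>i\<in>UNIV. (x$i) ^ a i) has_derivative
      (\<lambda>h. \<Sum>i\<in>UNIV. (of_nat (a i) * h$i * (x$i)^(a i - 1)) * (\<Prod>j\<in>UNIV - {i}. (x$j) ^ a j))) (at x)"
    by (intro has_derivative_prod has_derivative_power
        bounded_linear_imp_has_derivative[OF bounded_linear_vec_nth])
  moreover have "(\<lambda>h. \<Sum>i\<in>UNIV. (of_nat (a i) * h$i * (x$i)^(a i - 1)) * (\<Prod>j\<in>UNIV - {i}. (x$j) ^ a j))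
      = (\<lambda>h. \<Sum>k\<in>UNIV. monomial_deriv k a x * h$k)"
    by (auto simp: monomial_deriv_def monomial_fun_upd intro!: sum.cong)
  ultimately show ?thesis
    unfolding monomial_def[abs_def] by simp
qed

lemma poly_repr_has_derivative:
  assumes "poly_repr A c g f"
  shows "(f has_derivative (\<lambda>h. \<Sum>k\<in>UNIV. (\<Sum>a\<in>A. c a * monomial_deriv k (g a) x) * h$k)) (at x)"
proof -
  have "((\<lambda>x. \<Sum>a\<in>A. c a * monomial (g a) x) has_derivative
      (\<lambda>h. \<Sum>a\<in>A. c a * (\<Sum>k\<in>UNIV. monomial_deriv k (g a) x * h$k))) (at x)"
    by (intro has_derivative_sum has_derivative_mult_right monomial_has_derivative)
  moreover have "(\<lambda>h. \<Sum>a\<in>A. c a * (\<Sum>k\<in>UNIV. monomial_deriv k (g a) x * h$k))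
      = (\<lambda>h. \<Sum>k\<in>UNIV. (\<Sum>a\<in>A. c a * monomial_deriv k (g a) x) * h$k)"
    by (auto simp: sum_distrib_left sum_distrib_right algebra_simps intro: sum.swap)
  moreover have "f = (\<lambda>x. \<Sum>a\<in>A. c a * monomial (g a) x)"
    using assms by (auto simp: poly_repr_def)
  ultimately show ?thesis
    by simp
qed

lemma partial_deriv_eqI:
  fixes f :: "real^'n::finite \<Rightarrow> real"
  assumes "(f has_derivative (\<lambda>h. \<Sum>j\<in>UNIV. q j * h$j)) (at x)"
  shows "partial_deriv k f x = q k"
proof -
  have "((\<lambda>t::real. x + t *\<^sub>R axis k 1) has_derivative (\<lambda>t. t *\<^sub>R axis k 1)) (at 0)"
    by (intro derivative_eq_intros) auto
  moreover have "(f has_derivative (\<lambda>h. \<Sum>j\<in>UNIV. q j * h$j)) (at (x + 0 *\<^sub>R axis k 1))"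
    using assms by simp
  ultimately have "((\<lambda>t. f (x + t *\<^sub>R axis k 1)) has_derivative
      (\<lambda>t. \<Sum>j\<in>UNIV. q j * (t *\<^sub>R axis k (1::real)) $ j)) (at 0)"
    by (rule has_derivative_compose)
  moreover have "(\<lambda>t. \<Sum>j\<in>UNIV. q j * (t *\<^sub>R axis k (1::real)) $ j) = (*) (q k)"
    by (auto simp: axis_def if_distrib cong: if_cong)
  ultimately show ?thesis
    unfolding partial_deriv_def by (intro DERIV_imp_deriv) (simp add: has_field_derivative_def)
qed

lemma partial_deriv_poly_repr:
  assumes "poly_repr A c g f"
  shows "partial_deriv k f = (\<lambda>x. \<Sum>a\<in>A. c a * monomial_deriv k (g a) x)"
  using partial_deriv_eqI[OF poly_repr_has_derivative[OF assms]] by (simp add: fun_eq_iff)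

lemma poly_repr_partial_deriv:
  assumes "poly_repr A c g f"
  shows "poly_repr A (\<lambda>a. c a * real (g a k)) (\<lambda>a. (g a)(k := g a k - 1)) (partial_deriv k f)"
  using assms unfolding poly_repr_def partial_deriv_poly_repr[OF assms] monomial_deriv_def
  by (simp add: mult.assoc)

lemma polyfun_partial_deriv: "polyfun f \<Longrightarrow> polyfun (partial_deriv k f)"
  unfolding polyfun_def using poly_repr_partial_deriv by blast

lemma polyfun_has_derivative:
  assumes "polyfun f"
  shows "(f has_derivative (\<lambda>h. \<Sum>k\<in>UNIV. partial_deriv k f x * h$k)) (at x)"
proof -
  obtain A c g where repr: "poly_repr A c g f"
    using assms polyfun_def by blast
  show ?thesis
    using poly_repr_has_derivative[OF repr] by (simp add: partial_deriv_poly_repr[OF repr])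
qed

lemma continuous_on_polyfun: "polyfun f \<Longrightarrow> continuous_on S f"
  by (intro continuous_at_imp_continuous_on ballI has_derivative_continuous[OF polyfun_has_derivative])

lemma homogeneous_polyfun_partial_deriv:
  assumes "homogeneous_polyfun d f"
  shows "homogeneous_polyfun (d - 1) (partial_deriv k f)"
proof -
  obtain A c g where repr: "poly_repr A c g f"
    and deg: "\<forall>a\<in>A. c a \<noteq> 0 \<longrightarrow> total_degree (g a) = d"
    using assms homogeneous_polyfun_def by blast
  have "total_degree ((g a)(k := g a k - 1)) = d - 1" if "a \<in> A" "c a * real (g a k) \<noteq> 0" for a
    using that deg total_degree_fun_upd[of "g a" k "g a k - 1"] by auto
  then show ?thesis
    unfolding homogeneous_polyfun_def using poly_repr_partial_deriv[OF repr] by blast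
qed

lemma homogeneous_polyfun_coord_mult:
  assumes "homogeneous_polyfun d f"
  shows "homogeneous_polyfun (d + 1) (\<lambda>x. x$j * f x)"
proof -
  obtain A c g where repr: "poly_repr A c g f"
    and deg: "\<forall>a\<in>A. c a \<noteq> 0 \<longrightarrow> total_degree (g a) = d"
    using assms homogeneous_polyfun_def by blast
  have "poly_repr A c (\<lambda>a. (g a)(j := g a j + 1)) (\<lambda>x. x$j * f x)"
    using repr unfolding poly_repr_def
    by (auto simp: sum_distrib_left coord_mult_monomial algebra_simps)
  moreover have "total_degree ((g a)(j := g a j + 1)) = d + 1" if "a \<in> A" "c a \<noteq> 0" for a
    using that deg total_degree_fun_upd[of "g a" j "g a j + 1"] by auto
  ultimately show ?thesis
    unfolding homogeneous_polyfun_def by blast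
qed

lemma homogeneous_polyfun_minus:
  assumes "homogeneous_polyfun d f"
  shows "f (- x) = (-1)^d * f x"
proof -
  obtain A c g where repr: "poly_repr A c g f"
    and deg: "\<forall>a\<in>A. c a \<noteq> 0 \<longrightarrow> total_degree (g a) = d"
    using assms homogeneous_polyfun_def by blast
  have "monomial a (- x) = (-1)^(total_degree a) * monomial a x" for a
    unfolding monomial_def total_degree_def power_sum
    by (simp add: prod.distrib[symmetric] power_mult_distrib[symmetric])
  then have "(\<Sum>a\<in>A. c a * monomial (g a) (- x)) = (\<Sum>a\<in>A. (-1)^d * (c a * monomial (g a) x))"
    using deg by (intro sum.cong) auto
  with repr show ?thesis
    by (simp add: poly_repr_def sum_distrib_left)
qed

lemma euler_homogeneous_polyfun:
  assumes "homogeneous_polyfun d f"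
  shows "(\<Sum>k\<in>UNIV. x$k * partial_deriv k f x) = real d * f x"
proof -
  obtain A c g where repr: "poly_repr A c g f"
    and deg: "\<forall>a\<in>A. c a \<noteq> 0 \<longrightarrow> total_degree (g a) = d"
    using assms homogeneous_polyfun_def by blast
  have "x$k * monomial_deriv k a x = real (a k) * monomial a x" for k a
    using coord_mult_monomial[of x k "a(k := a k - 1)"]
    by (cases "a k = 0") (simp_all add: monomial_deriv_def)
  then have euler_monomial: "(\<Sum>k\<in>UNIV. x$k * monomial_deriv k a x) = real (total_degree a) * monomial a x"
    for a by (simp add: total_degree_def sum_distrib_right)
  have "(\<Sum>k\<in>UNIV. x$k * partial_deriv k f x)
      = (\<Sum>a\<in>A. c a * (\<Sum>k\<in>UNIV. x$k * monomial_deriv k (g a) x))"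
    by (simp add: partial_deriv_poly_repr[OF repr] sum_distrib_left algebra_simps
        sum.swap[of _ UNIV])
  also have "\<dots> = (\<Sum>a\<in>A. real d * (c a * monomial (g a) x))"
    using deg by (intro sum.cong) (auto simp: euler_monomial)
  also have "\<dots> = real d * f x"
    using repr by (simp add: poly_repr_def sum_distrib_left)
  finally show ?thesis .
qed

lemma partial_deriv_commute:
  assumes "polyfun f"
  shows "partial_deriv i (partial_deriv j f) = partial_deriv j (partial_deriv i f)"
proof -
  obtain A c g where repr: "poly_repr A c g f"
    using assms polyfun_def by blast
  show ?thesis
    unfolding partial_deriv_poly_repr[OF poly_repr_partial_deriv[OF repr]] monomial_deriv_def
    by (cases "i = j") (auto simp: fun_upd_twist algebra_simps intro!: sum.cong)
qed

lemma partial_deriv_coord_mult: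
  fixes f :: "real^'n::finite \<Rightarrow> real"
  assumes "polyfun f"
  shows "partial_deriv k (\<lambda>x. x$j * f x) x = (if k = j then f x else 0) + x$j * partial_deriv k f x"
proof (rule partial_deriv_eqI)
  have "((\<lambda>x. x$j * f x) has_derivative
      (\<lambda>h. h$j * f x + x$j * (\<Sum>k\<in>UNIV. partial_deriv k f x * h$k))) (at x)"
    using has_derivative_mult[OF bounded_linear_imp_has_derivative[OF bounded_linear_vec_nth]
        polyfun_has_derivative[OF assms]]
    by (simp add: algebra_simps)
  moreover have "(\<lambda>h. h$j * f x + x$j * (\<Sum>k\<in>UNIV. partial_deriv k f x * h$k)) =
      (\<lambda>h. \<Sum>k\<in>UNIV. ((if k = j then f x else 0) + x$j * partial_deriv k f x) * h$k)"
  proof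
    fix h :: "real^'n"
    have "((if k = j then f x else 0) + x$j * partial_deriv k f x) * h$k
        = (if k = j then h$j * f x else 0) + x$j * (partial_deriv k f x * h$k)" for k :: 'n
      by (simp add: algebra_simps)
    then show "h$j * f x + x$j * (\<Sum>k\<in>UNIV. partial_deriv k f x * h$k)
        = (\<Sum>k\<in>UNIV. ((if k = j then f x else 0) + x$j * partial_deriv k f x) * h$k)"
      by (simp add: sum.distrib sum_distrib_left)
  qed
  ultimately show "((\<lambda>x. x$j * f x) has_derivative
      (\<lambda>h. \<Sum>k\<in>UNIV. ((if k = j then f x else 0) + x$j * partial_deriv k f x) * h$k)) (at x)"
    by simp
qed

lemma partial_deriv_sum:
  assumes "finite J" "\<And>j. j \<in> J \<Longrightarrow> polyfun (F j)"
  shows "partial_deriv k (\<lambda>x. \<Sum>j\<in>J. F j x) x = (\<Sum>j\<in>J. partial_deriv k (F j) x)"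
proof (rule partial_deriv_eqI)
  have "((\<lambda>x. \<Sum>j\<in>J. F j x) has_derivative
      (\<lambda>h. \<Sum>j\<in>J. \<Sum>k\<in>UNIV. partial_deriv k (F j) x * h$k)) (at x)"
    using assms by (intro has_derivative_sum polyfun_has_derivative) auto
  then show "((\<lambda>x. \<Sum>j\<in>J. F j x) has_derivative
      (\<lambda>h. \<Sum>k\<in>UNIV. (\<Sum>j\<in>J. partial_deriv k (F j) x) * h$k)) (at x)"
    by (simp add: sum_distrib_right sum.swap[of _ J])
qed

lemma second_partial_eq_partial_deriv: "second_partial f i x = partial_deriv i (partial_deriv i f) x"
proof -
  let ?g = "\<lambda>t. f (x + t *\<^sub>R axis i 1)"
  have "deriv ?g = (\<lambda>s. partial_deriv i f (x + s *\<^sub>R axis i 1))"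
  proof
    fix s
    have "deriv ?g s = deriv (\<lambda>t. ?g (t + s)) 0"
      unfolding deriv_def using DERIV_shift[of ?g _ 0 s] by simp
    also have "(\<lambda>t. ?g (t + s)) = (\<lambda>t. f (x + s *\<^sub>R axis i 1 + t *\<^sub>R axis i 1))"
      by (simp add: scaleR_add_left algebra_simps)
    finally show "deriv ?g s = partial_deriv i f (x + s *\<^sub>R axis i 1)"
      by (simp add: partial_deriv_def)
  qed
  then show ?thesis
    by (simp add: second_partial_def numeral_2_eq_2 partial_deriv_def)
qed

section \<open>Orthogonality of harmonic polynomials to the coordinate functions\<close>

lemma sum_angular_derivatives_coord_mult:
  fixes R :: "real^'n::finite \<Rightarrow> real"
  assumes R: "homogeneous_polyfun d R" and v: "norm v = 1"
  shows "(\<Sum>j\<in>UNIV. v$i * partial_deriv j (\<lambda>x. x$j * R x) v - v$j * partial_deriv i (\<lambda>x. x$j * R x) v)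
    = (real CARD('n) + real d - 1) * (v$i * R v) - partial_deriv i R v"
proof -
  have pR: "polyfun R"
    using R by (rule homogeneous_polyfun_imp_polyfun)
  have unit: "(\<Sum>j\<in>UNIV. v$j * v$j) = 1"
    using v dot_square_norm[of v] by (simp add: inner_vec_def)
  have "(\<Sum>j\<in>UNIV. v$i * partial_deriv j (\<lambda>x. x$j * R x) v - v$j * partial_deriv i (\<lambda>x. x$j * R x) v)
      = (\<Sum>j\<in>UNIV. v$i * R v + v$i * (v$j * partial_deriv j R v)
          - (if i = j then v$i * R v else 0) - (v$j * v$j) * partial_deriv i R v)"
    unfolding partial_deriv_coord_mult[OF pR] by (intro sum.cong) (auto simp: algebra_simps)
  also have "\<dots> = real CARD('n) * (v$i * R v) + v$i * (\<Sum>j\<in>UNIV. v$j * partial_deriv j R v)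
      - v$i * R v - (\<Sum>j\<in>UNIV. v$j * v$j) * partial_deriv i R v"
    by (simp add: sum.distrib sum_subtractf sum_distrib_left sum_distrib_right)
  also have "\<dots> = (real CARD('n) + real d - 1) * (v$i * R v) - partial_deriv i R v"
    by (simp add: euler_homogeneous_polyfun[OF R] unit algebra_simps)
  finally show ?thesis .
qed

lemma integrable_sphere_surface_polyfun: "polyfun f \<Longrightarrow> integrable sphere_surface f"
  by (intro continuous_integrable_sphere_surface continuous_on_polyfun)

lemma integrable_sphere_surface_coord_mult_polyfun:
  "polyfun f \<Longrightarrow> integrable sphere_surface (\<lambda>v. v$i * f v)"
  by (intro continuous_integrable_sphere_surface continuous_intros continuous_on_polyfun)

lemma integral_sphere_surface_coord_mult_homogeneous:
  fixes R :: "real^'n::finite \<Rightarrow> real"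
  assumes R: "homogeneous_polyfun d R"
  shows "(real CARD('n) + real d - 1) * (\<integral>v. v$i * R v \<partial>sphere_surface)
    = integral\<^sup>L sphere_surface (partial_deriv i R)"
proof -
  let ?S = "sphere_surface :: (real^'n) measure"
  define f where "f j x = x$j * R x" for j and x :: "real^'n"
  have pf: "polyfun (f j)" for j
    unfolding f_def by (rule homogeneous_polyfun_imp_polyfun[OF homogeneous_polyfun_coord_mult[OF R]])
  have "(\<integral>v. v$i * partial_deriv j (f j) v - v$j * partial_deriv i (f j) v \<partial>?S) = 0" for j
  proof (cases "i = j")
    case False
    then show ?thesis
      by (rule integral_sphere_surface_angular_derivative[OF _ polyfun_has_derivative[OF pf]
            continuous_on_polyfun[OF polyfun_partial_deriv[OF pf]]])
  qed simp
  moreover have "integrable ?S (\<lambda>v. v$i * partial_deriv j (f j) v - v$j * partial_deriv i (f j) v)" for j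
    using pf by (intro Bochner_Integration.integrable_diff
        integrable_sphere_surface_coord_mult_polyfun polyfun_partial_deriv)
  ultimately have "(\<integral>v. (\<Sum>j\<in>UNIV. v$i * partial_deriv j (f j) v - v$j * partial_deriv i (f j) v) \<partial>?S) = 0"
    by (simp add: Bochner_Integration.integral_sum)
  also have "(\<integral>v. (\<Sum>j\<in>UNIV. v$i * partial_deriv j (f j) v - v$j * partial_deriv i (f j) v) \<partial>?S)
      = (\<integral>v. (real CARD('n) + real d - 1) * (v$i * R v) - partial_deriv i R v \<partial>?S)"
    unfolding f_def
    by (intro Bochner_Integration.integral_cong refl sum_angular_derivatives_coord_mult[OF R])
       (simp add: space_sphere_surface)
  finally show ?thesis
    using R by (simp add: integrable_sphere_surface_coord_mult_polyfun integrable_sphere_surface_polyfun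
        polyfun_partial_deriv homogeneous_polyfun_imp_polyfun)
qed

lemma partial_deriv_zero: "partial_deriv i (\<lambda>x. 0) x = 0"
  unfolding partial_deriv_def by (rule DERIV_imp_deriv) simp

lemma sum_second_partials_partial_deriv:
  fixes P :: "real^'n::finite \<Rightarrow> real"
  assumes P: "polyfun P" and harmonic: "\<And>x. (\<Sum>j\<in>UNIV. partial_deriv j (partial_deriv j P) x) = 0"
  shows "(\<Sum>j\<in>UNIV. partial_deriv j (partial_deriv j (partial_deriv i P)) x) = 0"
proof -
  have "partial_deriv j (partial_deriv j (partial_deriv i P)) = partial_deriv i (partial_deriv j (partial_deriv j P))"
    for j
    using P by (simp add: partial_deriv_commute polyfun_partial_deriv)
  then have "(\<Sum>j\<in>UNIV. partial_deriv j (partial_deriv j (partial_deriv i P)) x)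
      = partial_deriv i (\<lambda>x. \<Sum>j\<in>UNIV. partial_deriv j (partial_deriv j P) x) x"
    using P by (simp add: partial_deriv_sum polyfun_partial_deriv)
  then show ?thesis
    by (simp add: harmonic partial_deriv_zero)
qed

(* Integration by parts applied to each partial derivative of Q, summed with Euler's identity,
   gives (n + m - 2) m \<integral> Q = \<integral> \<Delta>Q = 0. *)
lemma integral_sphere_surface_harmonic_eq_0:
  fixes Q :: "real^'n::finite \<Rightarrow> real"
  assumes n: "CARD('n) \<ge> 2" and Q: "homogeneous_polyfun m Q" and m: "m \<ge> 1"
    and harmonic: "\<And>x. (\<Sum>j\<in>UNIV. partial_deriv j (partial_deriv j Q) x) = 0"
  shows "integral\<^sup>L sphere_surface Q = 0"
proof -
  let ?S = "sphere_surface :: (real^'n) measure"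
  have pQ: "polyfun Q"
    using Q by (rule homogeneous_polyfun_imp_polyfun)
  have "(real CARD('n) + real m - 2) * (\<integral>v. v$j * partial_deriv j Q v \<partial>?S)
      = integral\<^sup>L ?S (partial_deriv j (partial_deriv j Q))" for j
    using integral_sphere_surface_coord_mult_homogeneous[OF homogeneous_polyfun_partial_deriv[OF Q], of j j] m
    by (simp add: of_nat_diff)
  then have "(real CARD('n) + real m - 2) * (\<Sum>j\<in>UNIV. \<integral>v. v$j * partial_deriv j Q v \<partial>?S)
      = (\<integral>x. (\<Sum>j\<in>UNIV. partial_deriv j (partial_deriv j Q) x) \<partial>?S)"
    using pQ by (simp add: sum_distrib_left Bochner_Integration.integral_sum
        integrable_sphere_surface_polyfun polyfun_partial_deriv)
  also have "\<dots> = 0"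
    by (simp add: harmonic)
  also have "(\<Sum>j\<in>UNIV. \<integral>v. v$j * partial_deriv j Q v \<partial>?S) = real m * integral\<^sup>L ?S Q"
    using pQ by (simp add: Bochner_Integration.integral_sum[symmetric] euler_homogeneous_polyfun[OF Q]
        integrable_sphere_surface_coord_mult_polyfun polyfun_partial_deriv)
  finally show ?thesis
    using n m by simp
qed

lemma harmonic_homogeneous_poly_imp:
  assumes "harmonic_homogeneous_poly k P"
  shows "homogeneous_polyfun k P" and "(\<Sum>j\<in>UNIV. partial_deriv j (partial_deriv j P) x) = 0"
  using assms
  by (auto simp: harmonic_homogeneous_poly_def laplacian_def second_partial_eq_partial_deriv
      homogeneous_poly_imp_homogeneous_polyfun)

lemma integral_sphere_surface_coord_mult_harmonic:
  fixes P :: "real^'n::finite \<Rightarrow> real"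
  assumes n: "CARD('n) \<ge> 2" and P: "harmonic_homogeneous_poly k P" and k: "k \<ge> 2"
  shows "(\<integral>v. v$i * P v \<partial>sphere_surface) = 0"
proof -
  note hP = harmonic_homogeneous_poly_imp[OF P]
  have "integral\<^sup>L sphere_surface (partial_deriv i P) = 0"
    using k sum_second_partials_partial_deriv[OF homogeneous_polyfun_imp_polyfun[OF hP(1)] hP(2)]
    by (intro integral_sphere_surface_harmonic_eq_0[OF n homogeneous_polyfun_partial_deriv[OF hP(1)]])
       auto
  then show ?thesis
    using integral_sphere_surface_coord_mult_homogeneous[OF hP(1), of i] n by simp
qed

lemma integral_sphere_surface_inner_mult_harmonic:
  fixes P :: "real^'n::finite \<Rightarrow> real"
  assumes "CARD('n) \<ge> 2" and P: "harmonic_homogeneous_poly k P" and "k \<ge> 2"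
  shows "(\<integral>v. (u \<bullet> v) * P v \<partial>sphere_surface) = 0"
proof -
  have pP: "polyfun P"
    using harmonic_homogeneous_poly_imp(1)[OF P] by (rule homogeneous_polyfun_imp_polyfun)
  have "(\<integral>v. (u \<bullet> v) * P v \<partial>sphere_surface) = (\<Sum>i\<in>UNIV. u$i * (\<integral>v. v$i * P v \<partial>sphere_surface))"
    using pP by (simp add: inner_vec_def sum_distrib_right mult.assoc Bochner_Integration.integral_sum
        integrable_sphere_surface_coord_mult_polyfun)
  then show ?thesis
    using integral_sphere_surface_coord_mult_harmonic[OF assms] by simp
qed

section \<open>The kernel\<close>

(* The even part t arcsin t / (2 pi) of Kinf on [-1, 1]; clamping makes it continuous on the
   whole line, where arccos has junk values outside [-1, 1]. *)
definition Kinf_even :: "real \<Rightarrow> real" where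
  "Kinf_even t = (let s = max (-1) (min 1 t) in Kinf s - s / 4)"

lemma Kinf_even_minus: "Kinf_even (- t) = Kinf_even t"
proof -
  define s where "s = max (-1) (min 1 t)"
  have "max (-1) (min 1 (- t)) = - s" "-1 \<le> s" "s \<le> 1"
    by (auto simp: s_def)
  then show ?thesis
    unfolding Kinf_even_def Kinf_def Let_def s_def[symmetric]
    by (simp add: arccos_minus field_simps)
qed

lemma continuous_on_Kinf_even: "continuous_on S Kinf_even"
  unfolding Kinf_even_def Kinf_def Let_def
  by (intro continuous_intros) auto

lemma Kinf_eq_linear_plus_even:
  assumes "\<bar>t\<bar> \<le> 1"
  shows "Kinf t = t / 4 + Kinf_even t"
proof -
  have "max (-1) (min 1 t) = t"
    using assms by auto
  then show ?thesis
    by (simp add: Kinf_even_def)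
qed

lemma integral_sphere_surface_Kinf_mult:
  fixes P :: "real^'n::finite \<Rightarrow> real"
  assumes u: "norm u = 1" and P: "continuous_on UNIV P"
  shows "(\<integral>v. Kinf (u \<bullet> v) * P v \<partial>sphere_surface)
    = 1/4 * (\<integral>v. (u \<bullet> v) * P v \<partial>sphere_surface) + (\<integral>v. Kinf_even (u \<bullet> v) * P v \<partial>sphere_surface)"
proof -
  have "\<bar>u \<bullet> v\<bar> \<le> 1" if "v \<in> sphere 0 1" for v
    using Cauchy_Schwarz_ineq2[of u v] u that by simp
  then have "(\<integral>v. Kinf (u \<bullet> v) * P v \<partial>sphere_surface)
      = (\<integral>v. 1/4 * ((u \<bullet> v) * P v) + Kinf_even (u \<bullet> v) * P v \<partial>sphere_surface)"
    by (intro Bochner_Integration.integral_cong)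
       (simp_all add: space_sphere_surface Kinf_eq_linear_plus_even algebra_simps)
  also have "\<dots> = 1/4 * (\<integral>v. (u \<bullet> v) * P v \<partial>sphere_surface)
      + (\<integral>v. Kinf_even (u \<bullet> v) * P v \<partial>sphere_surface)"
  proof -
    have "integrable sphere_surface (\<lambda>v. (u \<bullet> v) * P v)"
      using P by (intro continuous_integrable_sphere_surface continuous_intros)
    moreover have "integrable sphere_surface (\<lambda>v. Kinf_even (u \<bullet> v) * P v)"
      using P by (intro continuous_integrable_sphere_surface continuous_intros
          continuous_on_compose2[OF continuous_on_Kinf_even]) auto
    ultimately show ?thesis
      by simp
  qed
  finally show ?thesis .
qed

lemma integral_sphere_surface_Kinf_even_mult_odd:
  fixes P :: "real^'n::finite \<Rightarrow> real"
  assumes "continuous_on UNIV P" and "\<And>v. P (- v) = - P v"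
  shows "(\<integral>v. Kinf_even (u \<bullet> v) * P v \<partial>sphere_surface) = 0"
proof (rule integral_sphere_surface_odd_eq_0)
  show "continuous_on UNIV (\<lambda>v. Kinf_even (u \<bullet> v) * P v)"
    using assms(1) by (intro continuous_intros continuous_on_compose2[OF continuous_on_Kinf_even]) auto
  show "Kinf_even (u \<bullet> - v) * P (- v) = - (Kinf_even (u \<bullet> v) * P v)" for v
    using Kinf_even_minus[of "u \<bullet> v"] assms(2) by simp
qed

theorem theorem3:
  fixes Y :: "real^'n::finite \<Rightarrow> real" and k :: nat
  assumes "CARD('n) \<ge> 2"
    and "spherical_harmonic k Y"
    and "odd k" and "k \<ge> 3"
  shows "\<forall>u\<in>sphere 0 1.
           (\<integral>v. Kinf (u \<bullet> v) * Y v \<partial>(sphere_surface :: (real^'n) measure)) = 0"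
proof
  fix u :: "real^'n" assume u: "u \<in> sphere 0 1"
  obtain P where P: "harmonic_homogeneous_poly k P" and Y: "\<forall>v\<in>sphere 0 1. Y v = P v"
    using assms(2) unfolding spherical_harmonic_def by blast
  note hP = harmonic_homogeneous_poly_imp(1)[OF P]
  have cont_P: "continuous_on UNIV P"
    by (rule continuous_on_polyfun[OF homogeneous_polyfun_imp_polyfun[OF hP]])
  have odd_P: "P (- v) = - P v" for v
    using homogeneous_polyfun_minus[OF hP] assms(3) by simp
  have "(\<integral>v. Kinf (u \<bullet> v) * Y v \<partial>sphere_surface) = (\<integral>v. Kinf (u \<bullet> v) * P v \<partial>sphere_surface)"
    using Y by (intro Bochner_Integration.integral_cong) (simp_all add: space_sphere_surface)
  also have "\<dots> = 1/4 * (\<integral>v. (u \<bullet> v) * P v \<partial>sphere_surface)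
      + (\<integral>v. Kinf_even (u \<bullet> v) * P v \<partial>sphere_surface)"
    using u cont_P by (simp add: integral_sphere_surface_Kinf_mult)
  also have "\<dots> = 0"
    using integral_sphere_surface_inner_mult_harmonic[OF assms(1) P]
      integral_sphere_surface_Kinf_even_mult_odd[OF cont_P odd_P] assms(4)
    by simp
  finally show "(\<integral>v. Kinf (u \<bullet> v) * Y v \<partial>(sphere_surface :: (real^'n) measure)) = 0" .
qed

end
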